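(* Let $p$ be an odd prime, $R=F_p+vF_p$ with $v^2=v$, let $\vartheta=1-2v$ or $\vartheta=-1+2v$, and let $\phi_\vartheta:R^n\to F_p^{2n}$ be the Gray map. Let $\alpha$ be the $\vartheta$-constacyclic shift of $R^n$, $\alpha(c_0,\dots,c_{n-1})=(\vartheta c_{n-1},c_0,\dots,c_{n-2})$, and $\beta$ the cyclic shift of $F_p^{2n}$, $\beta(a_0,\dots,a_{2n-1})=(a_{2n-1},a_0,\dots,a_{2n-2})$. Then $\phi_\vartheta\alpha=\beta\phi_\vartheta$.
   Context: Write $\vartheta=\lambda+v\mu$ with $\lambda,\mu\in F_p$. The Gray map $\phi_\vartheta:R^n\to F_p^{2n}$ is defined for $c=(c_0,\dots,c_{n-1})$ with $c_i=r_i+vq_i$ ($r_i,q_i\in F_p$) by $\phi_\vartheta(c)=(\lambda(\lambda+\mu)q_0,\dots,\lambda(\lambda+\mu)q_{n-1},\,-\mu r_0-(\lambda+\mu)q_0,\dots,-\mu r_{n-1}-(\lambda+\mu)q_{n-1})$. *)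

theory Defs
  imports "HOL-Computational_Algebra.Primes" "HOL-Library.Cardinality"
begin

text \<open>The ring R = F_p + v F_p with v^2 = v.  An element r + v q is represented
  by the pair (r, q) over a field 'a playing the role of F_p.\<close>

type_synonym 'a Rel = "'a \<times> 'a"

definition R_mult :: "'a::field Rel \<Rightarrow> 'a Rel \<Rightarrow> 'a Rel" where
  "R_mult x y = (fst x * fst y, fst x * snd y + snd x * fst y + snd x * snd y)"

definition gray_map :: "'a::field Rel \<Rightarrow> 'a Rel list \<Rightarrow> 'a list" where
  "gray_map \<theta> c =
     (let l = fst \<theta>; m = snd \<theta> in
      map (\<lambda>x. l * (l + m) * snd x) c @ map (\<lambda>x. - m * fst x - (l + m) * snd x) c)"

definition consta_shift :: "'a::field Rel \<Rightarrow> 'a Rel list \<Rightarrow> 'a Rel list" where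
  "consta_shift \<theta> c = R_mult \<theta> (last c) # butlast c"

definition cyc_shift :: "'a list \<Rightarrow> 'a list" where
  "cyc_shift a = last a # butlast a"

end

theory Submission
  imports Defs
begin

text \<open>The Gray image of a vector is the list of first components of its entries
  followed by the list of second components. A cyclic shift moves the last second
  component to the front and the last first component to the middle. The
  constacyclic shift produces the same list because multiplication by
  \<open>\<theta> = \<plusminus>(1 - 2v)\<close> swaps the two Gray components of a single entry.\<close>

definition gray_fst :: "'a::field Rel \<Rightarrow> 'a Rel \<Rightarrow> 'a" where
  "gray_fst \<theta> x = fst \<theta> * (fst \<theta> + snd \<theta>) * snd x"

definition gray_snd :: "'a::field Rel \<Rightarrow> 'a Rel \<Rightarrow> 'a" where
  "gray_snd \<theta> x = - snd \<theta> * fst x - (fst \<theta> + snd \<theta>) * snd x"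

lemma gray_map_eq: "gray_map \<theta> c = map (gray_fst \<theta>) c @ map (gray_snd \<theta>) c"
  by (simp add: gray_map_def gray_fst_def gray_snd_def Let_def)

lemma gray_map_consta_shift_eq_cyc_shift:
  assumes "c \<noteq> []"
    and fst_mult: "\<And>x. gray_fst \<theta> (R_mult \<theta> x) = gray_snd \<theta> x"
    and snd_mult: "\<And>x. gray_snd \<theta> (R_mult \<theta> x) = gray_fst \<theta> x"
  shows "gray_map \<theta> (consta_shift \<theta> c) = cyc_shift (gray_map \<theta> c)"
proof -
  obtain xs x where c: "c = xs @ [x]"
    using assms(1) by (metis append_butlast_last_id)
  have "gray_map \<theta> (consta_shift \<theta> c)
      = gray_snd \<theta> x # map (gray_fst \<theta>) xs @ gray_fst \<theta> x # map (gray_snd \<theta>) xs"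
    by (simp add: c gray_map_eq consta_shift_def fst_mult snd_mult)
  also have "\<dots> = cyc_shift (gray_map \<theta> c)"
    by (simp add: c gray_map_eq cyc_shift_def butlast_append)
  finally show ?thesis .
qed

lemma gray_fst_R_mult_swap:
  assumes "\<theta> = (1, -2) \<or> \<theta> = (-1, 2)"
  shows "gray_fst \<theta> (R_mult \<theta> x) = gray_snd \<theta> x"
  using assms by (auto simp: gray_fst_def gray_snd_def R_mult_def algebra_simps)

lemma gray_snd_R_mult_swap:
  assumes "\<theta> = (1, -2) \<or> \<theta> = (-1, 2)"
  shows "gray_snd \<theta> (R_mult \<theta> x) = gray_fst \<theta> x"
  using assms by (auto simp: gray_fst_def gray_snd_def R_mult_def algebra_simps)

theorem lemma3p12:
  fixes p n :: nat and \<theta> :: "'a::{finite,field} Rel"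
  assumes "prime p" and "odd p" and "CARD('a) = p"
    and "n \<ge> 1"
    and "\<theta> = (1, -2) \<or> \<theta> = (-1, 2)"
  shows "\<forall>c. length c = n \<longrightarrow>
           gray_map \<theta> (consta_shift \<theta> c) = cyc_shift (gray_map \<theta> c)"
proof (intro allI impI)
  fix c :: "'a Rel list"
  assume "length c = n"
  with \<open>n \<ge> 1\<close> have "c \<noteq> []" by auto
  then show "gray_map \<theta> (consta_shift \<theta> c) = cyc_shift (gray_map \<theta> c)"
    using gray_map_consta_shift_eq_cyc_shift gray_fst_R_mult_swap gray_snd_R_mult_swap
      assms(5) by blast
qed

end
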